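(* For $z,\zeta \in \mathbb C\setminus \mathbb R$, $z \ne \overline \zeta$, \[ \frac{\mathcal P(z)-\mathcal P(\zeta)^*}{z-\overline{\zeta}} = \binom{\mathcal B^*}{-\mathcal A^*} \big(\mathcal M(\zeta)^*\mathcal B^*-\mathcal A^*\big)^{-1} \frac{\mathcal M(z)-\mathcal M(\zeta)^*}{z-\overline \zeta} \big(\mathcal B\,\mathcal M(z)-\mathcal A\big)^{-1} \big( \mathcal B \ \ -\mathcal A \big). \]
   Context: Let $\mathcal A,\mathcal B\in M_n(\mathbb C)$ with ${\rm rank}(\mathcal A\ \mathcal B)=n$ and $\mathcal A\mathcal B^*=\mathcal B\mathcal A^*$. Let $\mathcal M(z)={\rm diag}(m_1(z),\dots,m_n(z))$, where $m_j$ are the Weyl–Titchmarsh functions of Dirac-Krein operators on the edges $e_j=[v,v_j]$ of a star graph (each $m_j$ is a meromorphic Nevanlinna function with $\operatorname{Im} m_j(z)>0$ for $\operatorname{Im} z>0$), so that $\mathcal B\mathcal M(z)-\mathcal A$ is invertible for $z\in\mathbb C\setminus\mathbb R$. Define the $2n\times2n$ matrix function $\mathcal P(z) := \begin{pmatrix}0_n&0_n\\0_n&\mathcal M(z)\end{pmatrix} - \begin{pmatrix}-I_n\\\mathcal M(z)\end{pmatrix}\big(\mathcal B\mathcal M(z)-\mathcal A\big)^{-1} \mathcal B \,\big(-I_n \ \ \mathcal M(z) \big)$. *)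

theory Defs
  imports "HOL-Complex_Analysis.Complex_Analysis"
    "Jordan_Normal_Form.Schur_Decomposition"
    "Jordan_Normal_Form.Gauss_Jordan_Elimination"
    "Jordan_Normal_Form.DL_Rank"
begin

definition append_cols :: "'a :: zero mat \<Rightarrow> 'a mat \<Rightarrow> 'a mat" where
  "append_cols A B = mat (dim_row A) (dim_col A + dim_col B)
     (\<lambda>(i,j). if j < dim_col A then A $$ (i,j) else B $$ (i, j - dim_col A))"

definition minv :: "complex mat \<Rightarrow> complex mat" where
  "minv X = the (mat_inverse X)"

definition Mdiag :: "nat \<Rightarrow> (nat \<Rightarrow> complex \<Rightarrow> complex) \<Rightarrow> complex \<Rightarrow> complex mat" where
  "Mdiag n m z = mat_diag n (\<lambda>j. m j z)"

definition Pmat :: "nat \<Rightarrow> complex mat \<Rightarrow> complex mat \<Rightarrow> (nat \<Rightarrow> complex \<Rightarrow> complex) \<Rightarrow> complex \<Rightarrow> complex mat" where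
  "Pmat n A B m z =
     four_block_mat (0\<^sub>m n n) (0\<^sub>m n n) (0\<^sub>m n n) (Mdiag n m z)
     - ((- 1\<^sub>m n) @\<^sub>r Mdiag n m z) * minv (B * Mdiag n m z - A) * B
         * append_cols (- 1\<^sub>m n) (Mdiag n m z)"

end

theory Submission imports Defs begin

text \<open>First, B M(w) - A is invertible off the real axis: if v (B M(w) - A) = 0,
  put a = v A and b = v B, so a = b M(w). Since A B* = B A*, the number a b* = v A B* v* is real,
  while a b* = sum_j m_j(w) |b_j|^2 has imaginary part of one strict sign unless b = 0; then a = 0
  too, contradicting rank (A B) = n.

  Second, the identity itself is pure algebra. With X = (B M - A)^-1 and W = (M B* - A*)^-1 the
  symmetry gives X B = B* W, so P(z) has blocks -B* W, B* W M, 1 + A* W, -A* W M, and P(zeta)* has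
  the same blocks with M(zeta)* and Y = (M(zeta)* B* - A*)^-1 in place of M and W. The difference is
  governed by the resolvent identity Y - W = Y (M - M(zeta)*) B* W = Y (M - M(zeta)*) X B.\<close>

declare minus_carrier_mat [simp] uminus_carrier_mat [simp]

text \<open>Unlike mult_carrier_mat, this rule has no hidden inner dimension, so simp can use it on
  nested products of square matrices.\<close>

lemma mult_carrier_mat_square [simp]:
  "A \<in> carrier_mat n n \<Longrightarrow> B \<in> carrier_mat n n \<Longrightarrow> A * B \<in> carrier_mat n n"
  by simp

lemma mat_adjoint_eq_mat:
  "mat_adjoint (A :: complex mat) = mat (dim_col A) (dim_row A) (\<lambda>(i,j). cnj (A $$ (j,i)))"
  unfolding mat_adjoint_def mat_of_rows_def by (rule eq_matI) simp_all

lemma index_mat_adjoint [simp]: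
  "i < dim_col A \<Longrightarrow> j < dim_row A \<Longrightarrow> mat_adjoint (A :: complex mat) $$ (i,j) = cnj (A $$ (j,i))"
  by (simp add: mat_adjoint_eq_mat)

lemma dim_mat_adjoint [simp]:
  "dim_row (mat_adjoint (A :: complex mat)) = dim_col A"
  "dim_col (mat_adjoint (A :: complex mat)) = dim_row A"
  by (simp_all add: mat_adjoint_eq_mat)

lemma carrier_mat_adjoint [simp, intro]:
  "A \<in> carrier_mat r c \<Longrightarrow> mat_adjoint (A :: complex mat) \<in> carrier_mat c r"
  by (metis dim_mat_adjoint carrier_matD carrier_matI)

lemma mat_adjoint_mult:
  "A \<in> carrier_mat r k \<Longrightarrow> B \<in> carrier_mat k c \<Longrightarrow>
   mat_adjoint (A * (B :: complex mat)) = mat_adjoint B * mat_adjoint A"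
  by (rule eq_matI) (auto simp: scalar_prod_def intro: sum.cong)

lemma mat_adjoint_minus:
  "A \<in> carrier_mat r c \<Longrightarrow> B \<in> carrier_mat r c \<Longrightarrow>
   mat_adjoint (A - (B :: complex mat)) = mat_adjoint A - mat_adjoint B"
  by (rule eq_matI) simp_all

lemma mat_adjoint_uminus: "mat_adjoint (- (A :: complex mat)) = - mat_adjoint A"
  by (rule eq_matI) simp_all

lemma mat_adjoint_mat_adjoint [simp]: "mat_adjoint (mat_adjoint (A :: complex mat)) = A"
  by (rule eq_matI) simp_all

lemma mat_adjoint_one [simp]: "mat_adjoint (1\<^sub>m n :: complex mat) = 1\<^sub>m n"
  by (rule eq_matI) simp_all

lemma mat_adjoint_four_block_mat:
  "A \<in> carrier_mat r1 c1 \<Longrightarrow> B \<in> carrier_mat r1 c2 \<Longrightarrow> C \<in> carrier_mat r2 c1 \<Longrightarrow>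
   D \<in> carrier_mat r2 c2 \<Longrightarrow>
   mat_adjoint (four_block_mat A B C D :: complex mat) =
     four_block_mat (mat_adjoint A) (mat_adjoint C) (mat_adjoint B) (mat_adjoint D)"
  by (rule eq_matI) auto

lemma mat_adjoint_Mdiag:
  assumes "\<And>j. j < n \<Longrightarrow> m j (cnj z) = cnj (m j z)"
  shows "mat_adjoint (Mdiag n m z) = Mdiag n m (cnj z)"
  by (rule eq_matI) (auto simp: Mdiag_def mat_diag_def assms)

lemma Mdiag_carrier [simp, intro]: "Mdiag n m z \<in> carrier_mat n n"
  by (simp add: Mdiag_def)

lemma carrier_append_cols [simp, intro]:
  "A \<in> carrier_mat r c1 \<Longrightarrow> B \<in> carrier_mat r c2 \<Longrightarrow> append_cols A B \<in> carrier_mat r (c1 + c2)"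
  unfolding append_cols_def by (intro carrier_matI) auto

lemma minus_four_block_mat:
  assumes "A1 \<in> carrier_mat r1 c1" "B1 \<in> carrier_mat r1 c2" "C1 \<in> carrier_mat r2 c1"
    "D1 \<in> carrier_mat r2 c2" "A2 \<in> carrier_mat r1 c1" "B2 \<in> carrier_mat r1 c2"
    "C2 \<in> carrier_mat r2 c1" "D2 \<in> carrier_mat r2 c2"
  shows "four_block_mat A1 B1 C1 D1 - four_block_mat A2 B2 C2 D2 =
    four_block_mat (A1 - A2) (B1 - B2) (C1 - C2) (D1 - (D2 :: 'a :: ab_group_add mat))"
  by (rule eq_matI) (use assms in auto)

lemma append_rows_mult:
  assumes "A \<in> carrier_mat r1 k" "B \<in> carrier_mat r2 k" "C \<in> carrier_mat k c"
  shows "(A @\<^sub>r B) * C = (A * C) @\<^sub>r (B * (C :: 'a :: semiring_0 mat))"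
  by (rule eq_matI)
    (use assms in \<open>auto simp: append_rows_def scalar_prod_def intro!: sum.cong\<close>)

lemma append_rows_mult_append_cols:
  assumes "A \<in> carrier_mat r1 k" "B \<in> carrier_mat r2 k" "C \<in> carrier_mat k c1" "D \<in> carrier_mat k c2"
  shows "(A @\<^sub>r B) * append_cols C D =
    four_block_mat (A * C) (A * D) (B * C) (B * (D :: 'a :: semiring_0 mat))"
  by (rule eq_matI) (use assms in \<open>auto simp: append_rows_def append_cols_def
      scalar_prod_def intro!: sum.cong\<close>)

lemma append_rows_mult3_append_cols:
  assumes "C1 \<in> carrier_mat n n" "C2 \<in> carrier_mat n n" "Z1 \<in> carrier_mat n n"
    "Z2 \<in> carrier_mat n n" "Z3 \<in> carrier_mat n n" "R1 \<in> carrier_mat n n" "R2 \<in> carrier_mat n n"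
  shows "(C1 @\<^sub>r C2) * Z1 * Z2 * Z3 * append_cols R1 R2 =
    four_block_mat (C1 * Z1 * Z2 * Z3 * R1) (C1 * Z1 * Z2 * Z3 * R2)
      (C2 * Z1 * Z2 * Z3 * R1) (C2 * Z1 * Z2 * (Z3 :: 'a :: semiring_0 mat) * R2)"
  using assms
  by (simp add: append_rows_mult[of _ n n _ n _ n] append_rows_mult_append_cols[of _ n n _ n _ n _ n])

lemma mult_smult_right: "A * (a \<cdot>\<^sub>m B) = a \<cdot>\<^sub>m (A * (B :: 'a :: comm_semiring_0 mat))"
  by (rule eq_matI) (auto simp: scalar_prod_def sum_distrib_left ac_simps)

lemma mult_smult_left:
  "dim_col A = dim_row B \<Longrightarrow> (a \<cdot>\<^sub>m A) * B = a \<cdot>\<^sub>m (A * (B :: 'a :: comm_semiring_0 mat))"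
  by (rule eq_matI) (auto simp: scalar_prod_def sum_distrib_left ac_simps)

lemma mult_smult_middle:
  assumes "dim_col D = dim_row X" and "dim_col X = dim_row R"
  shows "C * W * (a \<cdot>\<^sub>m D) * X * R = a \<cdot>\<^sub>m (C * W * D * X * (R :: 'a :: comm_semiring_0 mat))"
  using assms by (simp add: mult_smult_right mult_smult_left)

lemma minv_unique:
  assumes K: "K \<in> carrier_mat n n" and W: "W \<in> carrier_mat n n"
    and KW: "K * W = 1\<^sub>m n" and WK: "W * K = 1\<^sub>m n"
  shows "minv K = W"
proof (cases "mat_inverse K")
  case None
  have "K \<in> Units (ring_mat TYPE(complex) n n)"
    unfolding Units_def ring_mat_def using K W KW WK by auto
  with mat_inverse(1)[OF K None, of n] show ?thesis by blast
next
  case (Some W')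
  with mat_inverse(2)[OF K] have W': "K * W' = 1\<^sub>m n" "W' * K = 1\<^sub>m n" "W' \<in> carrier_mat n n"
    by auto
  have "W' = W' * (K * W)" using KW W' by simp
  also have "\<dots> = (W' * K) * W" using W'(3) K W by simp
  also have "\<dots> = W" unfolding W'(2) using W by simp
  finally show ?thesis unfolding minv_def Some by simp
qed

lemma minv_inverse:
  assumes K: "K \<in> carrier_mat n n" and det: "det K \<noteq> 0"
  shows "minv K \<in> carrier_mat n n" "K * minv K = 1\<^sub>m n" "minv K * K = 1\<^sub>m n"
proof -
  obtain W where W: "mat_inverse K = Some W"
    using mat_inverse(1)[OF K] det_non_zero_imp_unit[OF K det] by fastforce
  from mat_inverse(2)[OF K W]
  show "minv K \<in> carrier_mat n n" "K * minv K = 1\<^sub>m n" "minv K * K = 1\<^sub>m n"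
    unfolding minv_def W by auto
qed

lemma (in vec_space) col_space_full_rank:
  assumes G: "G \<in> carrier_mat n k" and rank: "rank G = n"
  shows "col_space G = carrier_vec n"
proof
  obtain S where max: "maximal S (\<lambda>T. T \<subseteq> set (cols G) \<and> lin_indpt T)"
    using maximal_exists[of "\<lambda>T. T \<subseteq> set (cols G) \<and> lin_indpt T" "card (set (cols G))" "{}"]
    by (meson List.finite_set card_mono empty_iff empty_subsetI finite_lin_indpt2 rev_finite_subset)
  have S: "S \<subseteq> set (cols G)" "lin_indpt S" using max unfolding maximal_def by auto
  have "set (cols G) \<subseteq> carrier_vec n" using cols_dim[of G] G by auto
  with S have SC: "S \<subseteq> carrier_vec n" by auto
  have "finite S" using S(1) List.finite_set rev_finite_subset by blast
  moreover have "card S = n" using rank_card_indpt[OF G max] rank by simp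
  ultimately have "basis S" by (intro dim_li_is_basis) (use SC S(2) dim_is_n in auto)
  hence "carrier_vec n = span S" unfolding basis_def by auto
  also have "\<dots> \<subseteq> col_space G" unfolding col_space_def by (rule span_is_monotone[OF S(1)])
  finally show "carrier_vec n \<subseteq> col_space G" .
qed (use G in \<open>auto simp: col_space_eq\<close>)

lemma full_rank_transpose_kernel:
  fixes G :: "complex mat"
  assumes G: "G \<in> carrier_mat n k" and rank: "vec_space.rank n G = n"
    and v: "v \<in> carrier_vec n" and Gv: "transpose_mat G *\<^sub>v v = 0\<^sub>v k"
  shows "v = 0\<^sub>v n"
proof (rule eq_vecI)
  interpret vec_space "TYPE(complex)" n .
  fix i assume "i < dim_vec (0\<^sub>v n :: complex vec)"
  hence i: "i < n" by simp
  have "unit_vec n i \<in> col_space G" using col_space_full_rank[OF G rank] i by simp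
  then obtain x where x: "x \<in> carrier_vec k" and Gx: "G *\<^sub>v x = unit_vec n i"
    using col_space_eq[OF G] G by auto
  have "v $ i = (G *\<^sub>v x) \<bullet> v" using i v Gx by simp
  also have "\<dots> = x \<bullet> (transpose_mat G *\<^sub>v v)"
    using G x v by (simp add: scalar_prod_def mult_mat_vec_def sum_distrib_left sum_distrib_right
        sum.swap[of _ "{0..<n}"] ac_simps)
  also have "\<dots> = 0" using Gv x by simp
  finally show "v $ i = 0\<^sub>v n $ i" using i by simp
qed (use v in simp)

lemma sum_mult_cnj_sum:
  fixes v :: "nat \<Rightarrow> complex"
  shows "(\<Sum>j<n. (\<Sum>i<n. v i * P i j) * cnj (\<Sum>k<n. v k * Q k j)) =
    (\<Sum>i<n. \<Sum>k<n. v i * cnj (v k) * (\<Sum>j<n. P i j * cnj (Q k j)))"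
proof -
  have "(\<Sum>j<n. (\<Sum>i<n. v i * P i j) * cnj (\<Sum>k<n. v k * Q k j)) =
      (\<Sum>j<n. \<Sum>i<n. \<Sum>k<n. v i * cnj (v k) * (P i j * cnj (Q k j)))"
    by (simp add: sum_distrib_left sum_distrib_right mult_ac) (rule sum.cong[OF refl], rule sum.swap)
  also have "\<dots> = (\<Sum>i<n. \<Sum>j<n. \<Sum>k<n. v i * cnj (v k) * (P i j * cnj (Q k j)))"
    by (rule sum.swap)
  also have "\<dots> = (\<Sum>i<n. \<Sum>k<n. \<Sum>j<n. v i * cnj (v k) * (P i j * cnj (Q k j)))"
    by (rule sum.cong[OF refl], rule sum.swap)
  finally show ?thesis by (simp add: sum_distrib_left)
qed

text \<open>The sum is v A B* v*, real because A B* is Hermitian.\<close>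

lemma sum_lincomb_mult_cnj_real:
  fixes A B :: "complex mat" and v :: "nat \<Rightarrow> complex"
  assumes A: "A \<in> carrier_mat n n" and B: "B \<in> carrier_mat n n"
    and symm: "A * mat_adjoint B = B * mat_adjoint A"
  shows "(\<Sum>j<n. (\<Sum>i<n. v i * A $$ (i,j)) * cnj (\<Sum>i<n. v i * B $$ (i,j))) \<in> \<real>"
proof -
  have entry: "(\<Sum>j<n. A $$ (i,j) * cnj (B $$ (k,j))) = (\<Sum>j<n. B $$ (i,j) * cnj (A $$ (k,j)))"
    if "i < n" "k < n" for i k
    using that carrier_matD[OF A] carrier_matD[OF B] arg_cong[OF symm, of "\<lambda>C. C $$ (i,k)"]
    by (simp add: scalar_prod_def lessThan_atLeast0)
  let ?S = "\<Sum>j<n. (\<Sum>i<n. v i * A $$ (i,j)) * cnj (\<Sum>i<n. v i * B $$ (i,j))"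
  have "?S = (\<Sum>j<n. (\<Sum>i<n. v i * B $$ (i,j)) * cnj (\<Sum>i<n. v i * A $$ (i,j)))"
    unfolding sum_mult_cnj_sum by (intro sum.cong refl) (simp add: entry)
  also have "\<dots> = cnj ?S" by (simp add: mult.commute)
  finally show ?thesis by (subst Reals_cnj_iff) (rule sym)
qed

lemma definite_weighted_sum_real_imp_zero:
  fixes d :: "nat \<Rightarrow> complex" and x :: "nat \<Rightarrow> real"
  assumes definite: "(\<forall>j<n. Im (d j) > 0) \<or> (\<forall>j<n. Im (d j) < 0)"
    and nonneg: "\<And>j. j < n \<Longrightarrow> x j \<ge> 0"
    and real: "(\<Sum>j<n. d j * of_real (x j)) \<in> \<real>"
    and j: "j < n"
  shows "x j = 0"
proof -
  obtain s :: real where s: "\<And>j. j < n \<Longrightarrow> s * Im (d j) > 0"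
    using definite by (metis mult_1 mult_minus1 neg_0_less_iff_less)
  have "(\<Sum>j<n. Im (d j) * x j) = 0"
    using real by (simp add: Im_sum complex_is_Real_iff)
  hence "(\<Sum>j<n. s * Im (d j) * x j) = 0"
    by (simp add: mult.assoc sum_distrib_left[symmetric])
  moreover have "\<forall>j<n. s * Im (d j) * x j \<ge> 0"
    using s nonneg by (simp add: less_imp_le)
  ultimately have "s * Im (d j) * x j = 0"
    using j by (subst (asm) sum_nonneg_eq_0_iff) auto
  thus ?thesis using s[OF j] by (auto simp: zero_less_mult_iff)
qed

lemma det_mult_mat_diag_minus_nonzero:
  fixes A B :: "complex mat" and d :: "nat \<Rightarrow> complex"
  assumes A: "A \<in> carrier_mat n n" and B: "B \<in> carrier_mat n n"
    and rank: "vec_space.rank n (append_cols A B) = n"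
    and symm: "A * mat_adjoint B = B * mat_adjoint A"
    and definite: "(\<forall>j<n. Im (d j) > 0) \<or> (\<forall>j<n. Im (d j) < 0)"
  shows "det (B * mat_diag n d - A) \<noteq> 0"
proof
  let ?K = "B * mat_diag n d - A"
  have K: "?K \<in> carrier_mat n n" using A B by auto
  assume "det ?K = 0"
  hence "det (transpose_mat ?K) = 0" using det_transpose[OF K] by simp
  then obtain v where v: "v \<in> carrier_vec n" "v \<noteq> 0\<^sub>v n" and Kv: "transpose_mat ?K *\<^sub>v v = 0\<^sub>v n"
    using det_0_iff_vec_prod_zero[of "transpose_mat ?K" n] K by auto
  define a where "a j = (\<Sum>i<n. v $ i * A $$ (i,j))" for j
  define b where "b j = (\<Sum>i<n. v $ i * B $$ (i,j))" for j
  have a: "a j = d j * b j" if j: "j < n" for j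
  proof -
    have "0 = (transpose_mat ?K *\<^sub>v v) $ j" using Kv j by simp
    also have "\<dots> = (\<Sum>i<n. (B $$ (i,j) * d j - A $$ (i,j)) * v $ i)"
      using j v A B mat_diag_mult_right[OF B]
      by (auto simp: scalar_prod_def lessThan_atLeast0 intro!: sum.cong)
    also have "\<dots> = d j * b j - a j"
      unfolding a_def b_def by (simp add: sum_subtractf sum_distrib_left algebra_simps)
    finally show ?thesis by simp
  qed
  have "(\<Sum>j<n. a j * cnj (b j)) \<in> \<real>"
    unfolding a_def b_def by (rule sum_lincomb_mult_cnj_real[OF A B symm])
  moreover have "(\<Sum>j<n. a j * cnj (b j)) = (\<Sum>j<n. d j * of_real ((cmod (b j))\<^sup>2))"
    by (rule sum.cong) (simp_all only: a complex_norm_square mult.assoc lessThan_iff)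
  ultimately have b: "b j = 0" if "j < n" for j
    using definite_weighted_sum_real_imp_zero[OF definite _ _ that, of "\<lambda>j. (cmod (b j))\<^sup>2"] by simp
  have "transpose_mat (append_cols A B) *\<^sub>v v = 0\<^sub>v (n + n)"
  proof (rule eq_vecI)
    fix j assume "j < dim_vec (0\<^sub>v (n + n) :: complex vec)"
    hence j: "j < n + n" by simp
    have "(transpose_mat (append_cols A B) *\<^sub>v v) $ j = (if j < n then a j else b (j - n))"
      unfolding a_def b_def using j A B v
      by (auto simp: append_cols_def scalar_prod_def lessThan_atLeast0 mult.commute intro!: sum.cong)
    thus "(transpose_mat (append_cols A B) *\<^sub>v v) $ j = 0\<^sub>v (n + n) $ j" using a b j by auto
  qed (use A B in \<open>simp add: append_cols_def\<close>)
  with full_rank_transpose_kernel[OF _ rank v(1)] A B v(2) show False by blast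
qed

lemma Im_definite_off_real_axis:
  assumes refl: "\<And>j w. j < n \<Longrightarrow> w \<notin> \<real> \<Longrightarrow> m j (cnj w) = cnj (m j w)"
    and nev: "\<And>j w. j < n \<Longrightarrow> Im w > 0 \<Longrightarrow> Im (m j w) > 0"
    and w: "w \<notin> \<real>"
  shows "(\<forall>j<n. Im (m j w) > 0) \<or> (\<forall>j<n. Im (m j w) < 0)"
proof (cases "Im w > 0")
  case False
  with w have "Im (cnj w) > 0" by (simp add: complex_is_Real_iff)
  moreover have "m j w = cnj (m j (cnj w))" if "j < n" for j
    using refl[OF that, of "cnj w"] w by (simp add: Reals_cnj_iff)
  ultimately show ?thesis using nev by fastforce
qed (use nev in blast)

lemma (in ring) resolvent_difference_blocks:
  assumes carr: "A \<in> carrier R" "B \<in> carrier R" "A' \<in> carrier R" "B' \<in> carrier R"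
    "M \<in> carrier R" "N \<in> carrier R" "X \<in> carrier R" "Y \<in> carrier R" "W \<in> carrier R"
    and X: "X \<otimes> (B \<otimes> M \<ominus> A) = \<one>"
    and Y: "Y \<otimes> (N \<otimes> B' \<ominus> A') = \<one>" "(N \<otimes> B' \<ominus> A') \<otimes> Y = \<one>"
    and W: "(M \<otimes> B' \<ominus> A') \<otimes> W = \<one>"
    and symm: "A \<otimes> B' = B \<otimes> A'"
  shows "\<ominus> (X \<otimes> B) \<ominus> \<ominus> (B' \<otimes> Y) = B' \<otimes> Y \<otimes> (M \<ominus> N) \<otimes> X \<otimes> B"
    and "X \<otimes> B \<otimes> M \<ominus> B' \<otimes> (Y \<otimes> N) = B' \<otimes> Y \<otimes> (M \<ominus> N) \<otimes> X \<otimes> (\<ominus> A)"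
    and "M \<otimes> X \<otimes> B \<ominus> N \<otimes> (B' \<otimes> Y) = (\<ominus> A') \<otimes> Y \<otimes> (M \<ominus> N) \<otimes> X \<otimes> B"
    and "(M \<ominus> M \<otimes> X \<otimes> B \<otimes> M) \<ominus> (N \<ominus> N \<otimes> (B' \<otimes> (Y \<otimes> N))) =
      (\<ominus> A') \<otimes> Y \<otimes> (M \<ominus> N) \<otimes> X \<otimes> (\<ominus> A)"
proof -
  have XB: "X \<otimes> B = B' \<otimes> W"
  proof -
    have "X \<otimes> B = X \<otimes> B \<otimes> ((M \<otimes> B' \<ominus> A') \<otimes> W)" using W carr by simp
    also have "\<dots> = X \<otimes> (B \<otimes> M \<otimes> B' \<ominus> A \<otimes> B') \<otimes> W" unfolding symm using carr by algebra
    also have "\<dots> = (X \<otimes> (B \<otimes> M \<ominus> A)) \<otimes> B' \<otimes> W" using carr by algebra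
    finally show ?thesis using X carr by (simp add: m_assoc)
  qed
  have Y_minus_W: "Y \<ominus> W = Y \<otimes> (M \<ominus> N) \<otimes> X \<otimes> B"
  proof -
    have "Y \<ominus> W = Y \<otimes> ((M \<otimes> B' \<ominus> A') \<otimes> W) \<ominus> (Y \<otimes> (N \<otimes> B' \<ominus> A')) \<otimes> W"
      using W Y carr by simp
    also have "\<dots> = Y \<otimes> (M \<ominus> N) \<otimes> (B' \<otimes> W)" using carr by algebra
    also have "\<dots> = Y \<otimes> (M \<ominus> N) \<otimes> X \<otimes> B" unfolding XB[symmetric] using carr by algebra
    finally show ?thesis .
  qed
  have WM_minus_YN: "W \<otimes> M \<ominus> Y \<otimes> N = Y \<otimes> (M \<ominus> N) \<otimes> X \<otimes> (\<ominus> A)"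
  proof -
    have "Y \<otimes> (M \<ominus> N) \<otimes> X \<otimes> (\<ominus> A) =
        Y \<otimes> (M \<ominus> N) \<otimes> (X \<otimes> (B \<otimes> M \<ominus> A)) \<ominus> Y \<otimes> (M \<ominus> N) \<otimes> X \<otimes> B \<otimes> M"
      using carr by algebra
    also have "\<dots> = Y \<otimes> (M \<ominus> N) \<ominus> (Y \<ominus> W) \<otimes> M" unfolding X Y_minus_W using carr by simp
    also have "\<dots> = W \<otimes> M \<ominus> Y \<otimes> N" using carr by algebra
    finally show ?thesis by simp
  qed
  have MB'W: "M \<otimes> B' \<otimes> W = \<one> \<oplus> A' \<otimes> W"
  proof -
    have "M \<otimes> B' \<otimes> W = (M \<otimes> B' \<ominus> A') \<otimes> W \<oplus> A' \<otimes> W" using carr by algebra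
    thus ?thesis unfolding W .
  qed
  have NB'Y: "N \<otimes> (B' \<otimes> Y) = \<one> \<oplus> A' \<otimes> Y"
  proof -
    have "N \<otimes> (B' \<otimes> Y) = (N \<otimes> B' \<ominus> A') \<otimes> Y \<oplus> A' \<otimes> Y" using carr by algebra
    thus ?thesis unfolding Y(2) .
  qed
  have MXB: "M \<otimes> X \<otimes> B = \<one> \<oplus> A' \<otimes> W"
    unfolding MB'W[symmetric] using carr by (simp add: m_assoc XB)
  show "\<ominus> (X \<otimes> B) \<ominus> \<ominus> (B' \<otimes> Y) = B' \<otimes> Y \<otimes> (M \<ominus> N) \<otimes> X \<otimes> B"
  proof -
    have "\<ominus> (X \<otimes> B) \<ominus> \<ominus> (B' \<otimes> Y) = B' \<otimes> (Y \<ominus> W)" unfolding XB using carr by algebra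
    thus ?thesis unfolding Y_minus_W using carr by algebra
  qed
  show "X \<otimes> B \<otimes> M \<ominus> B' \<otimes> (Y \<otimes> N) = B' \<otimes> Y \<otimes> (M \<ominus> N) \<otimes> X \<otimes> (\<ominus> A)"
  proof -
    have "X \<otimes> B \<otimes> M \<ominus> B' \<otimes> (Y \<otimes> N) = B' \<otimes> (W \<otimes> M \<ominus> Y \<otimes> N)"
      unfolding XB using carr by algebra
    thus ?thesis unfolding WM_minus_YN using carr by algebra
  qed
  show "M \<otimes> X \<otimes> B \<ominus> N \<otimes> (B' \<otimes> Y) = (\<ominus> A') \<otimes> Y \<otimes> (M \<ominus> N) \<otimes> X \<otimes> B"
  proof -
    have "M \<otimes> X \<otimes> B \<ominus> N \<otimes> (B' \<otimes> Y) = (\<ominus> A') \<otimes> (Y \<ominus> W)"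
      unfolding MXB NB'Y using carr by algebra
    thus ?thesis unfolding Y_minus_W using carr by algebra
  qed
  show "(M \<ominus> M \<otimes> X \<otimes> B \<otimes> M) \<ominus> (N \<ominus> N \<otimes> (B' \<otimes> (Y \<otimes> N))) =
      (\<ominus> A') \<otimes> Y \<otimes> (M \<ominus> N) \<otimes> X \<otimes> (\<ominus> A)"
  proof -
    have "(M \<ominus> M \<otimes> X \<otimes> B \<otimes> M) \<ominus> (N \<ominus> N \<otimes> (B' \<otimes> (Y \<otimes> N))) =
        (M \<ominus> M \<otimes> X \<otimes> B \<otimes> M) \<ominus> (N \<ominus> N \<otimes> (B' \<otimes> Y) \<otimes> N)"
      using carr by algebra
    also have "\<dots> = (\<ominus> A') \<otimes> (W \<otimes> M \<ominus> Y \<otimes> N)"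
      unfolding MXB NB'Y using carr by algebra
    finally show ?thesis unfolding WM_minus_YN using carr by algebra
  qed
qed

lemma ring_mat_minus:
  fixes P Q :: "'a :: comm_ring_1 mat"
  assumes P: "P \<in> carrier_mat n n" and Q: "Q \<in> carrier_mat n n"
  shows "\<ominus>\<^bsub>ring_mat TYPE('a) n b\<^esub> P = - P"
    and "P \<ominus>\<^bsub>ring_mat TYPE('a) n b\<^esub> Q = P - Q"
proof -
  interpret R: ring "ring_mat TYPE('a) n b" by (rule ring_mat)
  have uminus: "\<ominus>\<^bsub>ring_mat TYPE('a) n b\<^esub> Q = - Q" if "Q \<in> carrier_mat n n" for Q
    by (rule R.minus_equality) (use that in \<open>auto simp: ring_mat_simps\<close>)
  show "\<ominus>\<^bsub>ring_mat TYPE('a) n b\<^esub> P = - P" using P by (rule uminus)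
  show "P \<ominus>\<^bsub>ring_mat TYPE('a) n b\<^esub> Q = P - Q"
    unfolding a_minus_def using P Q by (simp add: uminus ring_mat_simps add_uminus_minus_mat)
qed

lemma resolvent_difference_blocks_mat:
  fixes A B A' B' M N X Y W :: "'a :: comm_ring_1 mat"
  assumes carr: "A \<in> carrier_mat n n" "B \<in> carrier_mat n n" "A' \<in> carrier_mat n n"
    "B' \<in> carrier_mat n n" "M \<in> carrier_mat n n" "N \<in> carrier_mat n n"
    "X \<in> carrier_mat n n" "Y \<in> carrier_mat n n" "W \<in> carrier_mat n n"
    and X: "X * (B * M - A) = 1\<^sub>m n"
    and Y: "Y * (N * B' - A') = 1\<^sub>m n" "(N * B' - A') * Y = 1\<^sub>m n"
    and W: "(M * B' - A') * W = 1\<^sub>m n"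
    and symm: "A * B' = B * A'"
  shows "- (X * B) - - (B' * Y) = B' * Y * (M - N) * X * B"
    and "X * B * M - B' * (Y * N) = B' * Y * (M - N) * X * (- A)"
    and "M * X * B - N * (B' * Y) = (- A') * Y * (M - N) * X * B"
    and "(M - M * X * B * M) - (N - N * (B' * (Y * N))) = (- A') * Y * (M - N) * X * (- A)"
proof -
  interpret R: ring "ring_mat TYPE('a) n n" by (rule ring_mat)
  have carr': "A \<in> carrier (ring_mat TYPE('a) n n)" "B \<in> carrier (ring_mat TYPE('a) n n)"
    "A' \<in> carrier (ring_mat TYPE('a) n n)" "B' \<in> carrier (ring_mat TYPE('a) n n)"
    "M \<in> carrier (ring_mat TYPE('a) n n)" "N \<in> carrier (ring_mat TYPE('a) n n)"
    "X \<in> carrier (ring_mat TYPE('a) n n)" "Y \<in> carrier (ring_mat TYPE('a) n n)"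
    "W \<in> carrier (ring_mat TYPE('a) n n)"
    using carr by (simp_all add: ring_mat_simps)
  note blocks = R.resolvent_difference_blocks[OF carr']
  note to_mat = ring_mat_simps ring_mat_minus
  show "- (X * B) - - (B' * Y) = B' * Y * (M - N) * X * B"
    using carr X Y W symm blocks(1) by (simp add: to_mat)
  show "X * B * M - B' * (Y * N) = B' * Y * (M - N) * X * (- A)"
    using carr X Y W symm blocks(2) by (simp add: to_mat)
  show "M * X * B - N * (B' * Y) = (- A') * Y * (M - N) * X * B"
    using carr X Y W symm blocks(3) by (simp add: to_mat)
  show "(M - M * X * B * M) - (N - N * (B' * (Y * N))) = (- A') * Y * (M - N) * X * (- A)"
    using carr X Y W symm blocks(4) by (simp add: to_mat)
qed

definition Pmat_of :: "nat \<Rightarrow> complex mat \<Rightarrow> complex mat \<Rightarrow> complex mat \<Rightarrow> complex mat" where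
  "Pmat_of n A B L =
     four_block_mat (0\<^sub>m n n) (0\<^sub>m n n) (0\<^sub>m n n) L
     - ((- 1\<^sub>m n) @\<^sub>r L) * minv (B * L - A) * B * append_cols (- 1\<^sub>m n) L"

lemma Pmat_eq_Pmat_of: "Pmat n A B m z = Pmat_of n A B (Mdiag n m z)"
  unfolding Pmat_def Pmat_of_def ..

lemma Pmat_of_four_block:
  fixes A B L :: "complex mat"
  defines "X \<equiv> minv (B * L - A)"
  assumes A: "A \<in> carrier_mat n n" and B: "B \<in> carrier_mat n n" and L: "L \<in> carrier_mat n n"
    and det: "det (B * L - A) \<noteq> 0"
  shows "Pmat_of n A B L = four_block_mat (- (X * B)) (X * B * L) (L * X * B) (L - L * X * B * L)"
proof -
  have X: "X \<in> carrier_mat n n" unfolding X_def by (rule minv_inverse(1)[OF _ det]) (use A B L in simp)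
  have one: "- 1\<^sub>m n \<in> carrier_mat n n" by simp
  have "((- 1\<^sub>m n) @\<^sub>r L) * X * B = ((- 1\<^sub>m n) * X * B) @\<^sub>r (L * X * B)"
    using append_rows_mult[OF one L X] append_rows_mult[of _ n n _ n B n] X L B by simp
  hence "((- 1\<^sub>m n) @\<^sub>r L) * X * B * append_cols (- 1\<^sub>m n) L
      = four_block_mat (X * B) (- (X * B * L)) (- (L * X * B)) (L * X * B * L)"
    using append_rows_mult_append_cols[of _ n n _ n "- 1\<^sub>m n" n L n] X L B by simp
  hence "Pmat_of n A B L = four_block_mat (0\<^sub>m n n) (0\<^sub>m n n) (0\<^sub>m n n) L
      - four_block_mat (X * B) (- (X * B * L)) (- (L * X * B)) (L * X * B * L)"
    unfolding Pmat_of_def X_def by simp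
  also have "\<dots> = four_block_mat (- (X * B)) (X * B * L) (L * X * B) (L - L * X * B * L)"
    using X L B by (subst minus_four_block_mat[of _ n n]) (auto intro!: cong_four_block_mat eq_matI)
  finally show ?thesis .
qed

lemma mat_adjoint_minv:
  fixes K :: "complex mat"
  assumes K: "K \<in> carrier_mat n n" and det: "det K \<noteq> 0"
  shows "mat_adjoint (minv K) \<in> carrier_mat n n"
    and "mat_adjoint K * mat_adjoint (minv K) = 1\<^sub>m n"
    and "mat_adjoint (minv K) * mat_adjoint K = 1\<^sub>m n"
proof -
  note inv = minv_inverse[OF K det]
  show "mat_adjoint (minv K) \<in> carrier_mat n n" using inv(1) by simp
  show "mat_adjoint K * mat_adjoint (minv K) = 1\<^sub>m n"
    using mat_adjoint_mult[OF inv(1) K] inv(3) by simp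
  show "mat_adjoint (minv K) * mat_adjoint K = 1\<^sub>m n"
    using mat_adjoint_mult[OF K inv(1)] inv(2) by simp
qed

lemma minv_mat_adjoint:
  fixes K :: "complex mat"
  assumes K: "K \<in> carrier_mat n n" and det: "det K \<noteq> 0"
  shows "minv (mat_adjoint K) = mat_adjoint (minv K)"
  using K mat_adjoint_minv[OF K det] by (intro minv_unique) auto

lemma mat_adjoint_Pmat_of:
  fixes A B N :: "complex mat"
  defines "Y \<equiv> mat_adjoint (minv (B * N - A))"
  assumes A: "A \<in> carrier_mat n n" and B: "B \<in> carrier_mat n n" and N: "N \<in> carrier_mat n n"
    and det: "det (B * N - A) \<noteq> 0"
  shows "mat_adjoint (Pmat_of n A B N) =
    four_block_mat (- (mat_adjoint B * Y)) (mat_adjoint B * (Y * mat_adjoint N))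
      (mat_adjoint N * (mat_adjoint B * Y))
      (mat_adjoint N - mat_adjoint N * (mat_adjoint B * (Y * mat_adjoint N)))"
proof -
  let ?X = "minv (B * N - A)"
  have X: "?X \<in> carrier_mat n n" by (rule minv_inverse(1)[OF _ det]) (use A B N in simp)
  have adj: "mat_adjoint (P * Q) = mat_adjoint Q * mat_adjoint P"
    if "P \<in> carrier_mat n n" "Q \<in> carrier_mat n n" for P Q :: "complex mat"
    using that by (rule mat_adjoint_mult)
  show ?thesis
    unfolding Pmat_of_four_block[OF A B N det] Y_def using A B N X
    by (subst mat_adjoint_four_block_mat[of _ n n])
      (auto simp: adj mat_adjoint_uminus mat_adjoint_minus[OF N] simp del: assoc_mult_mat
        intro!: cong_four_block_mat)
qed

lemma Pmat_of_minus_mat_adjoint: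
  fixes A B L N :: "complex mat"
  assumes A: "A \<in> carrier_mat n n" and B: "B \<in> carrier_mat n n"
    and L: "L \<in> carrier_mat n n" and N: "N \<in> carrier_mat n n"
    and symm: "A * mat_adjoint B = B * mat_adjoint A"
    and det_L: "det (B * L - A) \<noteq> 0" and det_N: "det (B * N - A) \<noteq> 0"
    and det_L': "det (B * mat_adjoint L - A) \<noteq> 0"
  shows "Pmat_of n A B L - mat_adjoint (Pmat_of n A B N) =
    (mat_adjoint B @\<^sub>r (- mat_adjoint A))
    * minv (mat_adjoint N * mat_adjoint B - mat_adjoint A)
    * (L - mat_adjoint N) * minv (B * L - A) * append_cols B (- A)"
proof -
  let ?A' = "mat_adjoint A" and ?B' = "mat_adjoint B" and ?N' = "mat_adjoint N"
  define X where "X = minv (B * L - A)"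
  define Y where "Y = mat_adjoint (minv (B * N - A))"
  define W where "W = mat_adjoint (minv (B * mat_adjoint L - A))"
  have K: "B * K - A \<in> carrier_mat n n" if "K \<in> carrier_mat n n" for K
    using that A B by simp
  have adj_K: "mat_adjoint (B * K - A) = mat_adjoint K * ?B' - ?A'" if "K \<in> carrier_mat n n" for K
    using that A B by (simp add: mat_adjoint_minus[of _ n n] mat_adjoint_mult[of _ n n])
  have L': "mat_adjoint L \<in> carrier_mat n n" using L by simp
  note X = minv_inverse[OF K[OF L] det_L, folded X_def]
  note Y = mat_adjoint_minv[OF K[OF N] det_N, folded Y_def, unfolded adj_K[OF N]]
  note W = mat_adjoint_minv[OF K[OF L'] det_L', folded W_def, unfolded adj_K[OF L'],
      unfolded mat_adjoint_mat_adjoint]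
  have minv_Y: "minv (?N' * ?B' - ?A') = Y"
    using minv_mat_adjoint[OF K[OF N] det_N] unfolding adj_K[OF N] Y_def .
  have carr: "?A' \<in> carrier_mat n n" "?B' \<in> carrier_mat n n" "?N' \<in> carrier_mat n n"
    using A B N by simp_all
  note blocks = resolvent_difference_blocks_mat[OF A B carr(1,2) L carr(3) X(1) Y(1) W(1)
      X(3) Y(3) Y(2) W(2) symm]
  have "(?B' @\<^sub>r (- ?A')) * Y * (L - ?N') * X * append_cols B (- A) =
      four_block_mat (?B' * Y * (L - ?N') * X * B) (?B' * Y * (L - ?N') * X * (- A))
        ((- ?A') * Y * (L - ?N') * X * B) ((- ?A') * Y * (L - ?N') * X * (- A))"
    using A B L carr X(1) Y(1) by (intro append_rows_mult3_append_cols) simp_all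
  moreover have "Pmat_of n A B L - mat_adjoint (Pmat_of n A B N) =
      four_block_mat (- (X * B) - - (?B' * Y)) (X * B * L - ?B' * (Y * ?N'))
        (L * X * B - ?N' * (?B' * Y)) ((L - L * X * B * L) - (?N' - ?N' * (?B' * (Y * ?N'))))"
    unfolding Pmat_of_four_block[OF A B L det_L, folded X_def]
      mat_adjoint_Pmat_of[OF A B N det_N, folded Y_def]
    using A B L carr X(1) Y(1) by (intro minus_four_block_mat[of _ n n _ n _ n]) simp_all
  ultimately show ?thesis unfolding minv_Y X_def[symmetric] using blocks by simp
qed

theorem lemma4p3:
  fixes n :: nat and A B :: "complex mat" and m :: "nat \<Rightarrow> complex \<Rightarrow> complex"
    and z \<zeta> :: complex
  assumes A: "A \<in> carrier_mat n n" and B: "B \<in> carrier_mat n n"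
    and rank: "vec_space.rank n (append_cols A B) = n"
    and sym: "A * mat_adjoint B = B * mat_adjoint A"
    and mero: "\<And>j. j < n \<Longrightarrow> m j meromorphic_on UNIV"
    and holo: "\<And>j. j < n \<Longrightarrow> m j holomorphic_on (- \<real>)"
    and refl: "\<And>j w. j < n \<Longrightarrow> w \<notin> \<real> \<Longrightarrow> m j (cnj w) = cnj (m j w)"
    and nev: "\<And>j w. j < n \<Longrightarrow> Im w > 0 \<Longrightarrow> Im (m j w) > 0"
    and z: "z \<notin> \<real>" and \<zeta>: "\<zeta> \<notin> \<real>" and ne: "z \<noteq> cnj \<zeta>"
  shows "(1 / (z - cnj \<zeta>)) \<cdot>\<^sub>m (Pmat n A B m z - mat_adjoint (Pmat n A B m \<zeta>)) =
    (mat_adjoint B @\<^sub>r (- mat_adjoint A))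
    * minv (mat_adjoint (Mdiag n m \<zeta>) * mat_adjoint B - mat_adjoint A)
    * ((1 / (z - cnj \<zeta>)) \<cdot>\<^sub>m (Mdiag n m z - mat_adjoint (Mdiag n m \<zeta>)))
    * minv (B * Mdiag n m z - A)
    * append_cols B (- A)"
proof -
  have det: "det (B * Mdiag n m w - A) \<noteq> 0" if "w \<notin> \<real>" for w
    unfolding Mdiag_def
    using Im_definite_off_real_axis[of n m, OF refl nev that]
    by (rule det_mult_mat_diag_minus_nonzero[OF A B rank sym])
  have "mat_adjoint (Mdiag n m z) = Mdiag n m (cnj z)"
    using mat_adjoint_Mdiag refl z by blast
  hence det_z': "det (B * mat_adjoint (Mdiag n m z) - A) \<noteq> 0"
    using det z by (simp add: Reals_cnj_iff)
  have X: "minv (B * Mdiag n m z - A) \<in> carrier_mat n n"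
    by (rule minv_inverse(1)[OF _ det[OF z]]) (use A B in simp)
  have "Pmat n A B m z - mat_adjoint (Pmat n A B m \<zeta>) =
    (mat_adjoint B @\<^sub>r (- mat_adjoint A))
    * minv (mat_adjoint (Mdiag n m \<zeta>) * mat_adjoint B - mat_adjoint A)
    * (Mdiag n m z - mat_adjoint (Mdiag n m \<zeta>)) * minv (B * Mdiag n m z - A) * append_cols B (- A)"
    unfolding Pmat_eq_Pmat_of
    by (rule Pmat_of_minus_mat_adjoint[OF A B Mdiag_carrier Mdiag_carrier sym
          det[OF z] det[OF \<zeta>] det_z'])
  moreover have
    "dim_col (Mdiag n m z - mat_adjoint (Mdiag n m \<zeta>)) = dim_row (minv (B * Mdiag n m z - A))"
    and "dim_col (minv (B * Mdiag n m z - A)) = dim_row (append_cols B (- A))"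
    using X B by (simp_all add: Mdiag_def mat_diag_def append_cols_def)
  ultimately show ?thesis by (simp add: mult_smult_middle)
qed

end
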